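(* Let $r\in\mathcal R$ be a universal distance matrix and let $q$ be a finite distance matrix of order $N$ such that for some $n<N$, $r_{i,j}=q_{i,j}$ for $i,j=1,\dots,n$. Put $i_k=k$ for $k=1,\dots,n$. Then for every $\epsilon>0$ there exist natural numbers $i_{n+1},\dots,i_N$ such that $\max_{k,s=1,\dots,N}|r_{i_k,i_s}-q_{k,s}|<\epsilon$. Conversely, if an infinite proper distance matrix $r$ has this property for every finite distance matrix $q$ (whose upper-left $n\times n$ corner agrees with that of $r$, for some $n$) and every $\epsilon>0$, then $r$ is universal.
   Context: $\mathcal R$ is the set of infinite real matrices $r=\{r_{i,j}\}_{i,j\ge1}$ with $r_{i,i}=0$, $r_{i,j}\ge0$, $r_{i,j}=r_{j,i}$, $r_{i,k}+r_{k,j}\ge r_{i,j}$; a finite distance matrix of order $N$ is an $N\times N$ matrix with the same properties; $p_n(r)$ is the upper-left $n\times n$ corner. $r$ is proper if $r_{i,j}>0$ for $i\neq j$. For a distance matrix $q$ of order $n$, $A(q)=\{a\in\mathbb R^n:|a_i-a_j|\le q_{i,j}\le a_i+a_j\ \forall i,j\}$. A proper $r\in\mathcal R$ is universal if for every $n$, every $a\in A(p_n(r))$ and every $\epsilon>0$ there is $m\in\mathbb N$ with $\max_{1\le i\le n}|r_{i,m}-a_i|<\epsilon$. *)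

theory Defs
  imports Main Complex_Main
begin

text \<open>Indices are 0-based: the paper's index i corresponds to i-1 here.
  An infinite matrix is a function nat => nat => real; a finite matrix of
  order N is a function whose entries with indices < N are relevant.\<close>

definition dist_matrix_inf :: "(nat \<Rightarrow> nat \<Rightarrow> real) \<Rightarrow> bool" where
  "dist_matrix_inf r \<longleftrightarrow>
     (\<forall>i. r i i = 0) \<and> (\<forall>i j. r i j \<ge> 0) \<and> (\<forall>i j. r i j = r j i) \<and>
     (\<forall>i j k. r i k + r k j \<ge> r i j)"

definition dist_matrix_fin :: "nat \<Rightarrow> (nat \<Rightarrow> nat \<Rightarrow> real) \<Rightarrow> bool" where
  "dist_matrix_fin N q \<longleftrightarrow>
     (\<forall>i<N. q i i = 0) \<and> (\<forall>i<N. \<forall>j<N. q i j \<ge> 0) \<and>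
     (\<forall>i<N. \<forall>j<N. q i j = q j i) \<and>
     (\<forall>i<N. \<forall>j<N. \<forall>k<N. q i k + q k j \<ge> q i j)"

definition proper_matrix :: "(nat \<Rightarrow> nat \<Rightarrow> real) \<Rightarrow> bool" where
  "proper_matrix r \<longleftrightarrow> (\<forall>i j. i \<noteq> j \<longrightarrow> r i j > 0)"

text \<open>A(q) for a distance matrix q of order n; vectors are nat => real, only
  the first n entries matter.\<close>
definition A_set :: "nat \<Rightarrow> (nat \<Rightarrow> nat \<Rightarrow> real) \<Rightarrow> (nat \<Rightarrow> real) set" where
  "A_set n q = {a. \<forall>i<n. \<forall>j<n. \<bar>a i - a j\<bar> \<le> q i j \<and> q i j \<le> a i + a j}"

text \<open>p_n(r) is the upper-left n x n corner, i.e. r restricted to indices < n.\<close>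
definition universal :: "(nat \<Rightarrow> nat \<Rightarrow> real) \<Rightarrow> bool" where
  "universal r \<longleftrightarrow> dist_matrix_inf r \<and> proper_matrix r \<and>
     (\<forall>n. \<forall>a \<in> A_set n r. \<forall>\<epsilon>>0. \<exists>m. \<forall>i<n. \<bar>r i m - a i\<bar> < \<epsilon>)"

definition extension_property :: "(nat \<Rightarrow> nat \<Rightarrow> real) \<Rightarrow> bool" where
  "extension_property r \<longleftrightarrow>
     (\<forall>N q n. dist_matrix_fin N q \<and> n < N \<and> (\<forall>i<n. \<forall>j<n. r i j = q i j) \<longrightarrow>
        (\<forall>\<epsilon>>0. \<exists>idx :: nat \<Rightarrow> nat. (\<forall>k<n. idx k = k) \<and>
            (\<forall>k<N. \<forall>s<N. \<bar>r (idx k) (idx s) - q k s\<bar> < \<epsilon>)))"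

end

theory Submission
  imports Defs
begin

(* Forward direction: the points of q are realised one at a time. If the first M of them are
   realised up to error \<delta> by indices x 0, ..., x (M-1), then the McShane extension
     a p = \<delta> + min_{s<M} (q s M + r (x s) p)
   is 1-Lipschitz and satisfies r p p' \<le> a p + a p', so it lies in A(p_K(r)) for every K.
   Universality yields an index m with r i m close to a i, and a (x k) is within \<delta> of q k M.
   Halving the error at each step gives every prescribed accuracy.
   Backward direction: adjoining to p_n(r) a point at distances a \<in> A(p_n(r)) gives a finite
   distance matrix; the index the extension property chooses for that point is the required m. *)

lemma dist_matrix_infD:
  assumes "dist_matrix_inf r"
  shows "r i i = 0" "r i j \<ge> 0" "r i j = r j i" "r i j \<le> r i k + r k j"
  using assms unfolding dist_matrix_inf_def by auto

lemma dist_matrix_finD: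
  assumes "dist_matrix_fin N q" "i < N" "j < N" "k < N"
  shows "q i i = 0" "q i j = q j i" "q i j \<le> q i k + q k j"
  using assms unfolding dist_matrix_fin_def by auto

lemma A_setI:
  assumes "\<And>i j. r i j = r j i" "\<And>i j. a i \<le> a j + r i j" "\<And>i j. r i j \<le> a i + a j"
  shows "a \<in> A_set n r"
proof -
  have "a i - a j \<le> r i j" "a j - a i \<le> r i j" for i j
    using assms(2)[of i j] assms(2)[of j i] assms(1)[of j i] by linarith+
  then show ?thesis unfolding A_set_def using assms(3) by (auto simp: abs_le_iff)
qed

definition mcshane_extension ::
    "(nat \<Rightarrow> nat \<Rightarrow> real) \<Rightarrow> nat set \<Rightarrow> (nat \<Rightarrow> nat) \<Rightarrow> (nat \<Rightarrow> real) \<Rightarrow> nat \<Rightarrow> real" where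
  "mcshane_extension r S x c p = Min ((\<lambda>s. c s + r (x s) p) ` S)"

lemma mcshane_extension_le:
  assumes "finite S" "s \<in> S"
  shows "mcshane_extension r S x c p \<le> c s + r (x s) p"
  unfolding mcshane_extension_def using assms by (intro Min_le) auto

lemma mcshane_extension_attained:
  assumes "finite S" "S \<noteq> {}"
  obtains s where "s \<in> S" "mcshane_extension r S x c p = c s + r (x s) p"
proof -
  have "mcshane_extension r S x c p \<in> (\<lambda>s. c s + r (x s) p) ` S"
    unfolding mcshane_extension_def using assms by (intro Min_in) auto
  then show ?thesis using that by blast
qed

lemma mcshane_extension_lipschitz:
  assumes "dist_matrix_inf r" "finite S" "S \<noteq> {}"
  shows "mcshane_extension r S x c p \<le> mcshane_extension r S x c p' + r p p'"
proof -
  obtain s where s: "s \<in> S" "mcshane_extension r S x c p' = c s + r (x s) p'"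
    using mcshane_extension_attained[OF assms(2,3)] .
  have "mcshane_extension r S x c p \<le> c s + r (x s) p"
    using mcshane_extension_le[OF assms(2) s(1)] .
  also have "\<dots> \<le> c s + r (x s) p' + r p' p"
    using dist_matrix_infD(4)[OF assms(1), of "x s" p p'] by simp
  finally show ?thesis
    using s(2) dist_matrix_infD(3)[OF assms(1), of p' p] by simp
qed

lemma mcshane_extension_at_anchor:
  assumes "dist_matrix_inf r" "finite S" "S \<noteq> {}" "k \<in> S"
    and "\<forall>s\<in>S. c k \<le> c s + r (x s) (x k) + \<delta>"
  shows "c k - \<delta> \<le> mcshane_extension r S x c (x k)" "mcshane_extension r S x c (x k) \<le> c k"
proof -
  obtain s where "s \<in> S" "mcshane_extension r S x c (x k) = c s + r (x s) (x k)"
    using mcshane_extension_attained[OF assms(2,3)] .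
  then show "c k - \<delta> \<le> mcshane_extension r S x c (x k)" using assms(5) by auto
  show "mcshane_extension r S x c (x k) \<le> c k"
    using mcshane_extension_le[OF assms(2,4), of r x c "x k"] dist_matrix_infD(1)[OF assms(1)] by simp
qed

lemma mcshane_extension_add_ge:
  assumes "dist_matrix_inf r" "finite S" "S \<noteq> {}"
    and "\<forall>s\<in>S. \<forall>t\<in>S. r (x s) (x t) \<le> c s + c t + \<delta>"
  shows "r p p' \<le> mcshane_extension r S x c p + mcshane_extension r S x c p' + \<delta>"
proof -
  obtain s where s: "s \<in> S" "mcshane_extension r S x c p = c s + r (x s) p"
    using mcshane_extension_attained[OF assms(2,3)] .
  obtain t where t: "t \<in> S" "mcshane_extension r S x c p' = c t + r (x t) p'"
    using mcshane_extension_attained[OF assms(2,3)] .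
  have "r p p' \<le> r (x s) p + r (x s) (x t) + r (x t) p'"
    using dist_matrix_infD(4)[OF assms(1), of p p' "x s"]
      dist_matrix_infD(4)[OF assms(1), of "x s" p' "x t"] dist_matrix_infD(3)[OF assms(1), of p "x s"]
    by linarith
  moreover have "r (x s) (x t) \<le> c s + c t + \<delta>" using assms(4) s(1) t(1) by blast
  ultimately show ?thesis using s(2) t(2) by linarith
qed

definition approx_embedding ::
    "real \<Rightarrow> nat \<Rightarrow> (nat \<Rightarrow> nat \<Rightarrow> real) \<Rightarrow> (nat \<Rightarrow> nat \<Rightarrow> real) \<Rightarrow> (nat \<Rightarrow> nat) \<Rightarrow> bool" where
  "approx_embedding \<epsilon> M r q idx \<longleftrightarrow> (\<forall>k<M. \<forall>s<M. \<bar>r (idx k) (idx s) - q k s\<bar> < \<epsilon>)"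

lemma approx_embedding_mono:
  "approx_embedding \<epsilon> M r q idx \<Longrightarrow> \<epsilon> \<le> \<epsilon>' \<Longrightarrow> approx_embedding \<epsilon>' M r q idx"
  unfolding approx_embedding_def by force

lemma approx_embedding_fun_upd:
  assumes "dist_matrix_inf r" "dist_matrix_fin N q" "M < N" "\<epsilon> > 0"
    and "approx_embedding \<epsilon> M r q x" "\<forall>k<M. \<bar>r (x k) m - q k M\<bar> < \<epsilon>"
  shows "approx_embedding \<epsilon> (Suc M) r q (x(M := m))"
  unfolding approx_embedding_def
proof (intro allI impI)
  fix k s assume "k < Suc M" "s < Suc M"
  then consider "k < M" "s < M" | "k < M" "s = M" | "k = M" "s < M" | "k = M" "s = M"
    by linarith
  then show "\<bar>r ((x(M := m)) k) ((x(M := m)) s) - q k s\<bar> < \<epsilon>"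
  proof cases
    case 1
    then show ?thesis using assms(5) unfolding approx_embedding_def by simp
  next
    case 2
    then show ?thesis using assms(6) by simp
  next
    case 3
    then show ?thesis
      using assms(6) dist_matrix_infD(3)[OF assms(1), of m "x s"]
        dist_matrix_finD(2)[OF assms(2), of M s] assms(3) by simp
  next
    case 4
    then show ?thesis
      using assms(3,4) dist_matrix_infD(1)[OF assms(1)] dist_matrix_finD(1)[OF assms(2)] by simp
  qed
qed

lemma universal_approx_one_point_extension:
  assumes "universal r" "dist_matrix_fin N q" "M < N" "approx_embedding \<delta> M r q x"
  shows "\<exists>m. \<forall>k<M. \<bar>r (x k) m - q k M\<bar> < 2 * \<delta>"
proof (cases "M = 0")
  case True
  then show ?thesis by simp
next
  case False
  have r: "dist_matrix_inf r" and univ: "\<forall>n. \<forall>a \<in> A_set n r. \<forall>\<epsilon>>0. \<exists>m. \<forall>i<n. \<bar>r i m - a i\<bar> < \<epsilon>"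
    using assms(1) unfolding universal_def by auto
  have err: "\<bar>r (x k) (x s) - q k s\<bar> < \<delta>" if "k < M" "s < M" for k s
    using assms(4) that unfolding approx_embedding_def by blast
  have q: "q i j = q j i" "q i j \<le> q i k + q k j" if "i \<le> M" "j \<le> M" "k \<le> M" for i j k
    using dist_matrix_finD[OF assms(2)] that assms(3) by auto
  have "\<delta> > 0" using err[of 0 0] False by linarith
  have S: "finite {..<M}" "{..<M} \<noteq> {}" using False by auto
  define f where "f = mcshane_extension r {..<M} x (\<lambda>s. q s M)"
  have "r (x s) (x t) \<le> q s M + q t M + \<delta>" if "s < M" "t < M" for s t
  proof -
    have "q s t \<le> q s M + q M t" "q M t = q t M"
      using q(2)[of s t M] q(1)[of M t M] that by simp_all
    then show ?thesis using err[OF that] by (simp add: abs_less_iff)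
  qed
  then have f_add: "r p p' \<le> f p + f p' + \<delta>" for p p'
    unfolding f_def by (intro mcshane_extension_add_ge[OF r S]) simp
  have "q k M \<le> q s M + r (x s) (x k) + \<delta>" if "s < M" "k < M" for s k
  proof -
    have "q k M \<le> q k s + q s M" "q k s = q s k"
      using q(2)[of k M s] q(1)[of k s s] that by simp_all
    then show ?thesis using err[OF that] by (simp add: abs_less_iff)
  qed
  then have f_anchor: "q k M - \<delta> \<le> f (x k)" "f (x k) \<le> q k M" if "k < M" for k
    unfolding f_def
    using mcshane_extension_at_anchor[OF r S, where k = k and x = x and \<delta> = \<delta> and c = "\<lambda>s. q s M"]
      that by simp_all
  define K where "K = Suc (Max (x ` {..<M}))"
  have "(\<lambda>p. f p + \<delta>) \<in> A_set K r"
  proof (rule A_setI)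
    show "f p + \<delta> \<le> f p' + \<delta> + r p p'" for p p'
      unfolding f_def using mcshane_extension_lipschitz[OF r S] by simp
    show "r p p' \<le> f p + \<delta> + (f p' + \<delta>)" for p p'
      using f_add[of p p'] \<open>\<delta> > 0\<close> by simp
  qed (rule dist_matrix_infD(3)[OF r])
  from univ[rule_format, OF this \<open>\<delta> > 0\<close>]
  obtain m where m: "\<forall>i<K. \<bar>r i m - (f i + \<delta>)\<bar> < \<delta>" by blast
  show ?thesis
  proof (intro exI allI impI)
    fix k assume "k < M"
    then have "x k < K" unfolding K_def using S(1) by (simp add: le_imp_less_Suc)
    then have "\<bar>r (x k) m - (f (x k) + \<delta>)\<bar> < \<delta>" using m by blast
    then show "\<bar>r (x k) m - q k M\<bar> < 2 * \<delta>"
      using f_anchor[OF \<open>k < M\<close>] by (simp add: abs_less_iff)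
  qed
qed

lemma universal_approx_embedding:
  assumes "universal r" "dist_matrix_fin N q" "\<forall>i<n. \<forall>j<n. r i j = q i j"
    and "n \<le> M" "M \<le> N" "\<epsilon> > 0"
  shows "\<exists>idx. (\<forall>k<n. idx k = k) \<and> approx_embedding \<epsilon> M r q idx"
  using assms(4-6)
proof (induction M arbitrary: \<epsilon> rule: dec_induct)
  case base
  have "approx_embedding \<epsilon> n r q (\<lambda>k. k)"
    using assms(3) \<open>\<epsilon> > 0\<close> unfolding approx_embedding_def by simp
  then show ?case by (intro exI[of _ "\<lambda>k. k"]) simp
next
  case (step M)
  have r: "dist_matrix_inf r" using assms(1) unfolding universal_def by blast
  obtain x where x: "\<forall>k<n. x k = k" "approx_embedding (\<epsilon> / 2) M r q x"
    using step.IH[of "\<epsilon> / 2"] step.prems by auto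
  have "M < N" "\<epsilon> > 0" using step.prems by simp_all
  obtain m where "\<forall>k<M. \<bar>r (x k) m - q k M\<bar> < 2 * (\<epsilon> / 2)"
    using universal_approx_one_point_extension[OF assms(1,2) \<open>M < N\<close> x(2)] by blast
  moreover have "approx_embedding \<epsilon> M r q x"
    using approx_embedding_mono[OF x(2)] \<open>\<epsilon> > 0\<close> by simp
  ultimately have "approx_embedding \<epsilon> (Suc M) r q (x(M := m))"
    using approx_embedding_fun_upd[OF r assms(2) \<open>M < N\<close> \<open>\<epsilon> > 0\<close>] by simp
  moreover have "\<forall>k<n. (x(M := m)) k = k" using x(1) step.hyps by simp
  ultimately show ?case by blast
qed

definition point_extension ::
    "nat \<Rightarrow> (nat \<Rightarrow> nat \<Rightarrow> real) \<Rightarrow> (nat \<Rightarrow> real) \<Rightarrow> nat \<Rightarrow> nat \<Rightarrow> real" where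
  "point_extension n r a i j =
     (if i < n \<and> j < n then r i j else if i < n then a i else if j < n then a j else 0)"

lemma dist_matrix_fin_point_extension:
  assumes "dist_matrix_inf r" "a \<in> A_set n r"
  shows "dist_matrix_fin (Suc n) (point_extension n r a)"
proof -
  have a: "a i \<le> r i j + a j" "a i \<le> a j + r i j" "r i j \<le> a i + a j"
    if "i < n" "j < n" for i j
    using assms(2) that unfolding A_set_def by (fastforce simp: abs_le_iff)+
  have "a i \<ge> 0" if "i < n" for i
    using a(3)[OF that that] dist_matrix_infD(1)[OF assms(1)] by simp
  then show ?thesis
    using a dist_matrix_infD[OF assms(1)]
    unfolding dist_matrix_fin_def point_extension_def by (auto simp: less_Suc_eq abs_le_iff)
qed

lemma extension_property_approx_A_set:
  assumes "dist_matrix_inf r" "extension_property r" "a \<in> A_set n r" "\<epsilon> > 0"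
  shows "\<exists>m. \<forall>i<n. \<bar>r i m - a i\<bar> < \<epsilon>"
proof -
  have "\<forall>i<n. \<forall>j<n. r i j = point_extension n r a i j"
    unfolding point_extension_def by simp
  then obtain idx where idx: "\<forall>k<n. idx k = k"
      "\<forall>k<Suc n. \<forall>s<Suc n. \<bar>r (idx k) (idx s) - point_extension n r a k s\<bar> < \<epsilon>"
    using assms(2,4) dist_matrix_fin_point_extension[OF assms(1,3)]
    unfolding extension_property_def by blast
  have "\<bar>r i (idx n) - a i\<bar> < \<epsilon>" if "i < n" for i
    using idx(2)[rule_format, of i n] idx(1) that unfolding point_extension_def by simp
  then show ?thesis by blast
qed

theorem corollary2:
  fixes r :: "nat \<Rightarrow> nat \<Rightarrow> real"
  shows "(universal r \<longrightarrow> extension_property r) \<and>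
         (dist_matrix_inf r \<and> proper_matrix r \<and> extension_property r \<longrightarrow> universal r)"
proof (intro conjI impI)
  assume "universal r"
  show "extension_property r"
    unfolding extension_property_def
  proof (intro allI impI)
    fix N q n and \<epsilon> :: real
    assume "dist_matrix_fin N q \<and> n < N \<and> (\<forall>i<n. \<forall>j<n. r i j = q i j)" "\<epsilon> > 0"
    then show "\<exists>idx. (\<forall>k<n. idx k = k) \<and> (\<forall>k<N. \<forall>s<N. \<bar>r (idx k) (idx s) - q k s\<bar> < \<epsilon>)"
      using universal_approx_embedding[OF \<open>universal r\<close>, of N q n N \<epsilon>]
      unfolding approx_embedding_def by simp
  qed
next
  assume "dist_matrix_inf r \<and> proper_matrix r \<and> extension_property r"
  then show "universal r"
    using extension_property_approx_A_set[of r] unfolding universal_def by simp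
qed

end
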